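(* Let $X$ be a random variable with mean zero, finite variance $\sigma^2>0$ and density $f_X=e^{-\varphi}$ with $\varphi$ differentiable, and suppose there are $x_l<0<x_r$ such that 1. $\varphi'(x)\le x/\sigma^2$ for $x\le x_l$, 2. $\varphi'(x)\ge x/\sigma^2$ for $x\ge x_r$. Let $X^*$ have the zero bias distribution of $X$, with density $f_{X^*}$. Then $f_{X^*}(x)\le f_X(x)$ for all $x\in(-\infty,x_l)\cup(x_r,\infty)$. If in addition $\mathbb{E}X^3=0$ and $f_X(x)\le f_{X^*}(x)$ for every $x\in(x_l,x_r)$, then $X^*$ is smaller than $X$ in the convex order.
   Context: Zero bias transform: for $X$ with mean zero and finite variance $\sigma^2$, $X^*$ has the zero bias distribution of $X$ if $\mathbb{E}[Xf(X)]=\sigma^2\mathbb{E}[f'(X^* )]$ for all absolutely continuous $f$ for which the expectations exist; $X^*$ is absolutely continuous with density $f_{X^*}(t)=\sigma^{-2}\mathbb{E}[X\mathbb{I}_{X>t}]=-\sigma^{-2}\mathbb{E}[X\mathbb{I}_{X\le t}]$. Convex order: $U$ is smaller than $V$ in the convex order if $\mathbb{E}g(U)\le\mathbb{E}g(V)$ for every convex $g$ with both expectations finite. *)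

theory Defs
  imports "HOL-Probability.Probability"
begin

definition dens_var :: "(real \<Rightarrow> real) \<Rightarrow> real" where
  "dens_var f = (\<integral>x. x\<^sup>2 * f x \<partial>lborel)"

definition zero_bias_density :: "(real \<Rightarrow> real) \<Rightarrow> real \<Rightarrow> real" where
  "zero_bias_density f t =
     (\<integral>x. indicator {t<..} x * (x * f x) \<partial>lborel) / dens_var f"

definition convex_order_le :: "real measure \<Rightarrow> real measure \<Rightarrow> bool" where
  "convex_order_le M N \<longleftrightarrow>
     (\<forall>g::real \<Rightarrow> real. convex_on UNIV g \<longrightarrow> integrable M g \<longrightarrow> integrable N g \<longrightarrow>
        integral\<^sup>L M g \<le> integral\<^sup>L N g)"

end

theory Submission
  imports Defs
begin

text \<open>
  On the right tail, \<open>\<sigma>\<^sup>2 f\<^sup>*(t) = \<integral>\<^sub>t\<^sup>\<infinity> x f(x) dx\<close>, and the hypothesis on \<open>\<phi>'\<close> says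
  \<open>x f(x) \<le> -\<sigma>\<^sup>2 f'(x)\<close> there, so the integral is at most \<open>\<sigma>\<^sup>2 f(t)\<close>; the left tail is the
  mirror image, using \<open>\<sigma>\<^sup>2 f\<^sup>*(t) = -\<integral>\<^sub>-\<^sub>\<infinity>\<^sup>t x f(x) dx\<close>.
  For the convex order, \<open>X\<^sup>*\<close> has total mass 1 and mean \<open>E X\<^sup>3 / (2\<sigma>\<^sup>2) = 0\<close>, like \<open>X\<close>. Hence
  for convex \<open>g\<close> and its chord \<open>L\<close> through \<open>x\<^sub>l\<close> and \<open>x\<^sub>r\<close>,
  \<open>E g(X) - E g(X\<^sup>*) = \<integral> (f - f\<^sup>*)(g - L) \<ge> 0\<close>: both factors are \<open>\<ge> 0\<close> outside \<open>[x\<^sub>l, x\<^sub>r]\<close>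
  and \<open>\<le> 0\<close> inside.
\<close>

lemma set_integral_atLeast_le_of_deriv_bound:
  fixes u F F' :: "real \<Rightarrow> real"
  assumes u: "set_integrable lborel {a..} u"
    and F: "\<And>x. a \<le> x \<Longrightarrow> (F has_real_derivative F' x) (at x)"
    and le_F': "\<And>x. a \<le> x \<Longrightarrow> u x \<le> F' x"
    and F_le: "\<And>x. a \<le> x \<Longrightarrow> F x \<le> C"
  shows "(LBINT x:{a..}. u x) \<le> C - F a"
proof (rule tendsto_le[OF _ tendsto_const])
  show "((\<lambda>b. LBINT x:{a..b}. u x) \<longlongrightarrow> (LBINT x:{a..}. u x)) at_top"
    by (rule tendsto_set_lebesgue_integral_at_top[OF _ u]) simp
  show "eventually (\<lambda>b. (LBINT x:{a..b}. u x) \<le> C - F a) at_top"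
    unfolding eventually_at_top_linorder
  proof (intro exI allI impI)
    fix b assume "a \<le> b"
    have "set_integrable lborel {a..b} u"
      by (rule set_integrable_subset[OF u]) auto
    then have "(LBINT x:{a..b}. u x) = integral {a..b} u" and "u integrable_on {a..b}"
      by (simp_all add: set_borel_integral_eq_integral)
    moreover have "(F' has_integral (F b - F a)) {a..b}"
      using \<open>a \<le> b\<close> F
      by (intro fundamental_theorem_of_calculus)
         (auto simp: has_real_derivative_iff_has_vector_derivative intro: has_vector_derivative_at_within)
    ultimately have "(LBINT x:{a..b}. u x) \<le> F b - F a"
      using le_F' by (auto intro: has_integral_le)
    then show "(LBINT x:{a..b}. u x) \<le> C - F a"
      using F_le[of b] \<open>a \<le> b\<close> by linarith
  qed
qed simp

lemma set_integral_atMost_le_of_deriv_bound: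
  fixes u F F' :: "real \<Rightarrow> real"
  assumes u: "set_integrable lborel {..b} u"
    and F: "\<And>x. x \<le> b \<Longrightarrow> (F has_real_derivative F' x) (at x)"
    and le_F': "\<And>x. x \<le> b \<Longrightarrow> u x \<le> F' x"
    and F_ge: "\<And>x. x \<le> b \<Longrightarrow> C \<le> F x"
  shows "(LBINT x:{..b}. u x) \<le> F b - C"
proof -
  have "integrable lborel (\<lambda>x. indicator {..b} (0 + -1 * x) *\<^sub>R u (0 + -1 * x))"
    using u unfolding set_integrable_def by (rule lborel_integrable_real_affine) simp
  then have "set_integrable lborel {-b..} (\<lambda>x. u (- x))"
    unfolding set_integrable_def by (simp add: indicator_def minus_le_iff)
  moreover have "((\<lambda>x. - F (- x)) has_real_derivative F' (- x)) (at x)" if "- b \<le> x" for x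
  proof -
    have "((\<lambda>x. F (- x)) has_real_derivative F' (- x) * - 1) (at x)"
      using that by (intro DERIV_chain2[OF F]) (auto intro!: derivative_eq_intros)
    then show ?thesis
      using DERIV_minus by fastforce
  qed
  ultimately have "(LBINT x:{-b..}. u (- x)) \<le> - C - (- F (- (- b)))"
    using le_F' F_ge
    by (intro set_integral_atLeast_le_of_deriv_bound[where F="\<lambda>x. - F (- x)" and F'="\<lambda>x. F' (- x)"])
       auto
  moreover have "(LBINT x:{..b}. u x) = (LBINT x:{-b..}. u (- x))"
    by (subst set_integral_reflect) (auto intro!: arg_cong2[where f="set_lebesgue_integral lborel"])
  ultimately show ?thesis by simp
qed

lemma convex_on_chord_le:
  fixes g :: "real \<Rightarrow> real"
  assumes g: "convex_on UNIV g" and "a < b" and x: "x \<le> a \<or> b \<le> x"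
  shows "g a + (g b - g a) / (b - a) * (x - a) \<le> g x"
proof -
  define m where "m = (g b - g a) / (b - a)"
  have m: "m = (g a - g b) / (a - b)"
    unfolding m_def by (metis minus_diff_eq minus_divide_divide)
  consider "x < a" | "x = a" | "a < x" using x by linarith
  then have "m * (x - a) \<le> g x - g a"
  proof cases
    case 1
    have "(g x - g a) / (x - a) \<le> m"
      using convex_on_slope_le[OF g _ _ 1 \<open>a < b\<close>] m by simp
    with 1 show ?thesis by (simp add: divide_le_eq)
  next
    case 3
    with x have "b \<le> x" by linarith
    have "m \<le> (g a - g x) / (a - x)"
    proof (cases "b = x")
      case False
      with \<open>b \<le> x\<close> show ?thesis
        using convex_on_slope_le(1)[OF g _ _ \<open>a < b\<close>, of x] m by simp
    qed (simp add: m)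
    then have "m \<le> (g x - g a) / (x - a)"
      by (metis minus_diff_eq minus_divide_divide)
    with 3 show ?thesis by (simp add: le_divide_eq)
  qed simp
  then show ?thesis unfolding m_def by simp
qed

lemma convex_order_le_density_two_crossings:
  fixes p q :: "real \<Rightarrow> real"
  assumes nonneg: "\<And>x. 0 \<le> p x" "\<And>x. 0 \<le> q x"
    and mass: "has_bochner_integral lborel p c" "has_bochner_integral lborel q c"
    and mean: "has_bochner_integral lborel (\<lambda>x. x * p x) \<mu>"
      "has_bochner_integral lborel (\<lambda>x. x * q x) \<mu>"
    and "a < b"
    and outside: "\<And>x. x < a \<or> b < x \<Longrightarrow> p x \<le> q x"
    and inside: "\<And>x. a < x \<Longrightarrow> x < b \<Longrightarrow> q x \<le> p x"
  shows "convex_order_le (density lborel (\<lambda>x. ennreal (p x))) (density lborel (\<lambda>x. ennreal (q x)))"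
  unfolding convex_order_le_def
proof (intro allI impI)
  fix g :: "real \<Rightarrow> real"
  assume g: "convex_on UNIV g"
    and int_p: "integrable (density lborel (\<lambda>x. ennreal (p x))) g"
    and int_q: "integrable (density lborel (\<lambda>x. ennreal (q x))) g"
  have [measurable]: "g \<in> borel_measurable borel" "p \<in> borel_measurable borel" "q \<in> borel_measurable borel"
    using convex_on_continuous[OF open_UNIV g] mass
    by (auto intro: borel_measurable_continuous_onI dest: has_bochner_integral_integrable borel_measurable_integrable)
  let ?Ep = "integral\<^sup>L (density lborel (\<lambda>x. ennreal (p x))) g"
    and ?Eq = "integral\<^sup>L (density lborel (\<lambda>x. ennreal (q x))) g"
  define m where "m = (g b - g a) / (b - a)"
  define L where "L x = g a + m * (x - a)" for x
  have "has_bochner_integral lborel (\<lambda>x. p x * g x) ?Ep"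
    and "has_bochner_integral lborel (\<lambda>x. q x * g x) ?Eq"
    using int_p int_q nonneg by (simp_all add: has_bochner_integral_iff integrable_density integral_density)
  then have "has_bochner_integral lborel
      (\<lambda>x. (q x * g x - p x * g x) - (g a - m * a) * (q x - p x) - m * (x * q x - x * p x))
      (?Eq - ?Ep - (g a - m * a) * (c - c) - m * (\<mu> - \<mu>))"
    using mass mean by (intro has_bochner_integral_diff has_bochner_integral_mult_right)
  then have H: "has_bochner_integral lborel (\<lambda>x. (q x - p x) * (g x - L x)) (?Eq - ?Ep)"
    by (rule has_bochner_integral_cong[THEN iffD1, rotated 3]) (auto simp: L_def algebra_simps)
  have "0 \<le> (q x - p x) * (g x - L x)" for x
  proof -
    consider "x < a \<or> b < x" | "x = a \<or> x = b" | "a < x \<and> x < b" by linarith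
    then show ?thesis
    proof cases
      case 1
      then have "L x \<le> g x"
        using convex_on_chord_le[OF g \<open>a < b\<close>, of x] by (auto simp: L_def m_def)
      with 1 outside show ?thesis by simp
    next
      case 2
      with \<open>a < b\<close> show ?thesis by (auto simp: L_def m_def)
    next
      case 3
      then have "g x \<le> L x"
        using convex_onD_Icc'[OF convex_on_subset[OF g], of a b x] by (simp add: L_def m_def)
      with 3 inside show ?thesis by (simp add: mult_nonpos_nonpos)
    qed
  qed
  then have "0 \<le> (\<integral>x. (q x - p x) * (g x - L x) \<partial>lborel)"
    by (rule Bochner_Integration.integral_nonneg)
  then show "?Ep \<le> ?Eq"
    using has_bochner_integral_integral_eq[OF H] by simp
qed

lemma has_bochner_integral_of_nn_integral_parts:
  fixes u v :: "'a \<Rightarrow> real"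
  assumes [measurable]: "u \<in> borel_measurable M" and v: "integrable M v"
    and pos: "(\<integral>\<^sup>+x. ennreal (u x) \<partial>M) = (\<integral>\<^sup>+x. ennreal (v x) \<partial>M)"
    and neg: "(\<integral>\<^sup>+x. ennreal (- u x) \<partial>M) = (\<integral>\<^sup>+x. ennreal (- v x) \<partial>M)"
  shows "has_bochner_integral M u (integral\<^sup>L M v)"
proof -
  have "integrable M u"
    using v unfolding real_integrable_def pos neg by simp
  with v show ?thesis
    by (simp add: has_bochner_integral_iff real_lebesgue_integral_def pos neg)
qed

text \<open>
  \<open>X\<^sup>*\<close> is distributed as \<open>U X\<^sup>\<box>\<close>, with \<open>U\<close> uniform on \<open>[0, 1]\<close> and independent of the
  square-biased \<open>X\<^sup>\<box>\<close> of density \<open>x\<^sup>2 f(x) / \<sigma>\<^sup>2\<close>; the kernel is the joint density of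
  \<open>(X\<^sup>*, X\<^sup>\<box>)\<close>, and Tonelli's theorem turns moments of \<open>X\<^sup>*\<close> into moments of \<open>X\<close>.
\<close>
definition zero_bias_kernel :: "(real \<Rightarrow> real) \<Rightarrow> real \<Rightarrow> real \<Rightarrow> real" where
  "zero_bias_kernel f t x = \<bar>x\<bar> * f x / dens_var f * indicator {min 0 x..<max 0 x} t"

lemma zero_bias_kernel_eq:
  "zero_bias_kernel f t x =
     (if 0 \<le> t then indicator {t<..} x * (x * f x) else indicator {..t} x * - (x * f x)) / dens_var f"
  by (auto simp: zero_bias_kernel_def indicator_def)

lemma zero_bias_kernel_measurable [measurable]:
  assumes [measurable]: "f \<in> borel_measurable borel"
  shows "case_prod (zero_bias_kernel f) \<in> borel_measurable (lborel \<Otimes>\<^sub>M lborel)"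
proof -
  have "case_prod (zero_bias_kernel f) =
      (\<lambda>(t, x). \<bar>x\<bar> * f x / dens_var f * of_bool (min 0 x \<le> t \<and> t < max 0 x))"
    by (auto simp: zero_bias_kernel_def indicator_def fun_eq_iff)
  then show ?thesis
    by simp
qed

lemma nn_integral_segment_linear:
  fixes c x :: real
  shows "(\<integral>\<^sup>+t\<in>{min 0 x..<max 0 x}. ennreal (c * t) \<partial>lborel) = ennreal (c * x * \<bar>x\<bar> / 2)"
proof -
  have "(\<integral>\<^sup>+t\<in>{min 0 x..<max 0 x}. ennreal (c * t) \<partial>lborel)
      = (\<integral>\<^sup>+t. ennreal (c * t) * indicator {min 0 x..max 0 x} t \<partial>lborel)"
    using AE_lborel_singleton[of "max 0 x"]
    by (intro nn_integral_cong_AE) (auto simp: indicator_def elim!: eventually_mono)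
  also have "\<dots> = ennreal (c * x * \<bar>x\<bar> / 2)"
  proof (cases "0 \<le> c * x")
    case True
    have "0 \<le> c * t" if "t \<in> {min 0 x..max 0 x}" for t
      using that True by (auto simp: min_def max_def zero_le_mult_iff split: if_splits)
    then have "(\<integral>\<^sup>+t. ennreal (c * t) * indicator {min 0 x..max 0 x} t \<partial>lborel)
        = ennreal (c * (max 0 x)\<^sup>2 / 2 - c * (min 0 x)\<^sup>2 / 2)"
      by (intro nn_integral_FTC_Icc) (auto intro!: derivative_eq_intros)
    then show ?thesis
      by (auto simp: max_def min_def power2_eq_square mult.assoc)
  next
    case False
    have "c * t \<le> 0" if "t \<in> {min 0 x..max 0 x}" for t
      using that False by (auto simp: min_def max_def zero_le_mult_iff mult_le_0_iff split: if_splits)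
    then have "(\<integral>\<^sup>+t. ennreal (c * t) * indicator {min 0 x..max 0 x} t \<partial>lborel) = 0"
      by (intro nn_integral_zero') (auto simp: indicator_def ennreal_neg)
    moreover have "c * x * \<bar>x\<bar> / 2 \<le> 0"
      using False by (intro divide_nonpos_pos mult_nonpos_nonneg[of "c * x"]) auto
    ultimately show ?thesis
      by (simp add: ennreal_neg)
  qed
  finally show ?thesis .
qed

locale mean_zero_density =
  fixes f :: "real \<Rightarrow> real"
  assumes nonneg: "\<And>x. 0 \<le> f x"
    and integrable: "integrable lborel f"
    and integrable_first_moment: "integrable lborel (\<lambda>x. x * f x)"
    and mean_zero: "(\<integral>x. x * f x \<partial>lborel) = 0"
    and integrable_second_moment: "integrable lborel (\<lambda>x. x\<^sup>2 * f x)"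
    and dens_var_pos: "0 < dens_var f"
begin

lemma borel_measurable [measurable]: "f \<in> borel_measurable borel"
  using integrable by auto

lemma set_integrable_first_moment: "set_integrable lborel A (\<lambda>x. x * f x)" if "A \<in> sets borel"
  unfolding set_integrable_def
  by (rule integrable_mult_indicator) (simp_all add: that integrable_first_moment)

lemma zero_bias_density_eq_greaterThan:
  "zero_bias_density f t = (LBINT x:{t<..}. x * f x) / dens_var f"
  by (simp add: zero_bias_density_def set_lebesgue_integral_def)

lemma zero_bias_density_eq_atMost:
  "zero_bias_density f t = (LBINT x:{..t}. - (x * f x)) / dens_var f"
proof -
  have "(LBINT x:{t<..}. x * f x) + (LBINT x:{..t}. x * f x) = (LBINT x:{t<..} \<union> {..t}. x * f x)"
    by (rule set_integral_Un[symmetric]) (auto intro: set_integrable_first_moment)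
  also have "{t<..} \<union> {..t} = UNIV"
    by auto
  then have "(LBINT x:{t<..} \<union> {..t}. x * f x) = 0"
    using mean_zero by (simp add: set_lebesgue_integral_def)
  finally show ?thesis
    by (simp add: zero_bias_density_eq_greaterThan set_integral_uminus set_integrable_first_moment
        eq_neg_iff_add_eq_0 flip: minus_divide_left add_divide_distrib)
qed

lemma has_bochner_integral_zero_bias_kernel:
  "has_bochner_integral lborel (zero_bias_kernel f t) (zero_bias_density f t)"
proof (cases "0 \<le> t")
  case True
  have "has_bochner_integral lborel (\<lambda>x. indicator {t<..} x * (x * f x)) (LBINT x:{t<..}. x * f x)"
    using set_integrable_first_moment[of "{t<..}"]
    by (simp add: has_bochner_integral_iff set_integrable_def set_lebesgue_integral_def)
  from has_bochner_integral_divide[OF this, of "dens_var f"] True show ?thesis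
    unfolding zero_bias_kernel_eq[abs_def] zero_bias_density_eq_greaterThan by simp
next
  case False
  have "has_bochner_integral lborel (\<lambda>x. indicator {..t} x * - (x * f x)) (LBINT x:{..t}. - (x * f x))"
    using integrable_minus[OF set_integrable_first_moment[of "{..t}", unfolded set_integrable_def]]
    by (simp add: has_bochner_integral_iff set_lebesgue_integral_def)
  from has_bochner_integral_divide[OF this, of "dens_var f"] False show ?thesis
    unfolding zero_bias_kernel_eq[abs_def] zero_bias_density_eq_atMost by simp
qed

lemma zero_bias_kernel_nonneg: "0 \<le> zero_bias_kernel f t x"
  using nonneg dens_var_pos by (simp add: zero_bias_kernel_def)

lemma zero_bias_density_nonneg: "0 \<le> zero_bias_density f t"
  using has_bochner_integral_zero_bias_kernel[of t] zero_bias_kernel_nonneg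
  by (metis Bochner_Integration.integral_nonneg has_bochner_integral_integral_eq)

lemma zero_bias_density_measurable [measurable]: "zero_bias_density f \<in> borel_measurable borel"
proof -
  have "(\<lambda>t. \<integral>x. zero_bias_kernel f t x \<partial>lborel) \<in> borel_measurable lborel"
    by (rule lborel.borel_measurable_lebesgue_integral) measurable
  then show ?thesis
    by (simp add: has_bochner_integral_integral_eq[OF has_bochner_integral_zero_bias_kernel])
qed

lemma nn_integral_zero_bias_density:
  assumes [measurable]: "h \<in> borel_measurable borel"
  shows "(\<integral>\<^sup>+t. h t * ennreal (zero_bias_density f t) \<partial>lborel)
    = (\<integral>\<^sup>+x. ennreal (\<bar>x\<bar> * f x / dens_var f) * (\<integral>\<^sup>+t\<in>{min 0 x..<max 0 x}. h t \<partial>lborel) \<partial>lborel)"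
proof -
  have "ennreal (zero_bias_density f t) = (\<integral>\<^sup>+x. ennreal (zero_bias_kernel f t x) \<partial>lborel)" for t
    using has_bochner_integral_zero_bias_kernel[of t] zero_bias_kernel_nonneg
    by (simp add: has_bochner_integral_iff nn_integral_eq_integral)
  then have "(\<integral>\<^sup>+t. h t * ennreal (zero_bias_density f t) \<partial>lborel)
      = (\<integral>\<^sup>+t. \<integral>\<^sup>+x. h t * ennreal (zero_bias_kernel f t x) \<partial>lborel \<partial>lborel)"
    by (intro nn_integral_cong) (simp add: nn_integral_cmult)
  also have "\<dots> = (\<integral>\<^sup>+x. \<integral>\<^sup>+t. h t * ennreal (zero_bias_kernel f t x) \<partial>lborel \<partial>lborel)"
    by (rule lborel_pair.Fubini') measurable
  also have "\<dots> = (\<integral>\<^sup>+x. \<integral>\<^sup>+t. ennreal (\<bar>x\<bar> * f x / dens_var f) * (h t * indicator {min 0 x..<max 0 x} t) \<partial>lborel \<partial>lborel)"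
    by (intro nn_integral_cong) (auto simp: zero_bias_kernel_def indicator_def mult.commute)
  also have "\<dots> = (\<integral>\<^sup>+x. ennreal (\<bar>x\<bar> * f x / dens_var f) * (\<integral>\<^sup>+t\<in>{min 0 x..<max 0 x}. h t \<partial>lborel) \<partial>lborel)"
    by (intro nn_integral_cong nn_integral_cmult) measurable
  finally show ?thesis .
qed

lemma has_bochner_integral_zero_bias_density: "has_bochner_integral lborel (zero_bias_density f) 1"
proof (rule has_bochner_integral_nn_integral)
  have segment: "(\<integral>\<^sup>+t\<in>{min 0 x..<max 0 x}. 1 \<partial>lborel) = ennreal \<bar>x\<bar>" for x :: real
    by (cases "0 \<le> x") (simp_all add: max_def min_def)
  have "(\<integral>\<^sup>+t. ennreal (zero_bias_density f t) \<partial>lborel)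
      = (\<integral>\<^sup>+x. ennreal (\<bar>x\<bar> * f x / dens_var f) * ennreal \<bar>x\<bar> \<partial>lborel)"
    using nn_integral_zero_bias_density[of "\<lambda>_. 1"] segment by simp
  also have "\<dots> = (\<integral>\<^sup>+x. ennreal (x\<^sup>2 * f x / dens_var f) \<partial>lborel)"
    using nonneg dens_var_pos
    by (intro nn_integral_cong) (simp add: ennreal_mult'[symmetric] power2_eq_square abs_mult_self_eq)
  also have "\<dots> = ennreal (dens_var f / dens_var f)"
    using nonneg dens_var_pos integrable_second_moment unfolding dens_var_def
    by (subst nn_integral_eq_integral) auto
  finally show "(\<integral>\<^sup>+t. ennreal (zero_bias_density f t) \<partial>lborel) = ennreal 1"
    using dens_var_pos by simp
qed (simp_all add: zero_bias_density_nonneg)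

lemma has_bochner_integral_zero_bias_first_moment:
  assumes "integrable lborel (\<lambda>x. x ^ 3 * f x)"
  shows "has_bochner_integral lborel (\<lambda>t. t * zero_bias_density f t)
    ((\<integral>x. x ^ 3 * f x \<partial>lborel) / (2 * dens_var f))"
proof -
  have parts: "(\<integral>\<^sup>+t. ennreal (c * (t * zero_bias_density f t)) \<partial>lborel)
      = (\<integral>\<^sup>+x. ennreal (c * (x ^ 3 * f x / (2 * dens_var f))) \<partial>lborel)" for c
  proof -
    have "(\<integral>\<^sup>+t. ennreal (c * (t * zero_bias_density f t)) \<partial>lborel)
        = (\<integral>\<^sup>+t. ennreal (c * t) * ennreal (zero_bias_density f t) \<partial>lborel)"
      by (intro nn_integral_cong) (simp add: ennreal_mult'' zero_bias_density_nonneg flip: mult.assoc)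
    also have "\<dots> = (\<integral>\<^sup>+x. ennreal (\<bar>x\<bar> * f x / dens_var f) * ennreal (c * x * \<bar>x\<bar> / 2) \<partial>lborel)"
      by (simp add: nn_integral_zero_bias_density nn_integral_segment_linear)
    also have "\<dots> = (\<integral>\<^sup>+x. ennreal (c * (x ^ 3 * f x / (2 * dens_var f))) \<partial>lborel)"
    proof (intro nn_integral_cong)
      fix x :: real
      have "\<bar>x\<bar> * f x / dens_var f * (c * x * \<bar>x\<bar> / 2) = c * (x ^ 3 * f x / (2 * dens_var f))"
        by (simp add: power3_eq_cube abs_mult_self_eq[of x, symmetric] field_simps del: abs_mult_self_eq)
      then show "ennreal (\<bar>x\<bar> * f x / dens_var f) * ennreal (c * x * \<bar>x\<bar> / 2)
          = ennreal (c * (x ^ 3 * f x / (2 * dens_var f)))"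
        using nonneg dens_var_pos by (simp add: ennreal_mult'[symmetric])
    qed
    finally show ?thesis .
  qed
  have "has_bochner_integral lborel (\<lambda>t. t * zero_bias_density f t)
      (\<integral>x. x ^ 3 * f x / (2 * dens_var f) \<partial>lborel)"
    using parts[of 1] parts[of "- 1"] assms by (intro has_bochner_integral_of_nn_integral_parts) auto
  then show ?thesis
    by simp
qed

lemma zero_bias_density_le_of_right_tail:
  assumes deriv: "\<And>x. a \<le> x \<Longrightarrow> (f has_real_derivative f' x) (at x)"
    and tail: "\<And>x. a \<le> x \<Longrightarrow> f' x \<le> - x / dens_var f * f x"
  shows "zero_bias_density f a \<le> f a"
proof -
  have bound: "x * f x \<le> - dens_var f * f' x" if "a \<le> x" for x
    using tail[OF that] dens_var_pos by (simp add: field_simps)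
  have "(LBINT x:{a<..}. x * f x) = (LBINT x:{a..}. x * f x)"
    using AE_lborel_singleton[of a]
    by (intro set_integral_cong_set) (auto simp: set_borel_measurable_def elim!: eventually_mono)
  also have "\<dots> \<le> 0 - (- dens_var f * f a)"
    using deriv bound nonneg dens_var_pos
    by (intro set_integral_atLeast_le_of_deriv_bound[where F="\<lambda>x. - dens_var f * f x" and F'="\<lambda>x. - dens_var f * f' x"])
       (auto intro!: derivative_eq_intros set_integrable_first_moment)
  finally show ?thesis
    using dens_var_pos by (simp add: zero_bias_density_eq_greaterThan pos_divide_le_eq mult.commute)
qed

lemma zero_bias_density_le_of_left_tail:
  assumes deriv: "\<And>x. x \<le> b \<Longrightarrow> (f has_real_derivative f' x) (at x)"
    and tail: "\<And>x. x \<le> b \<Longrightarrow> - x / dens_var f * f x \<le> f' x"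
  shows "zero_bias_density f b \<le> f b"
proof -
  have bound: "- (x * f x) \<le> dens_var f * f' x" if "x \<le> b" for x
    using tail[OF that] dens_var_pos by (simp add: field_simps)
  have "set_integrable lborel {..b} (\<lambda>x. - (x * f x))"
    using set_integrable_first_moment[of "{..b}"] by (simp add: set_integrable_def)
  then have "(LBINT x:{..b}. - (x * f x)) \<le> dens_var f * f b - 0"
    using deriv bound nonneg dens_var_pos
    by (intro set_integral_atMost_le_of_deriv_bound[where F="\<lambda>x. dens_var f * f x" and F'="\<lambda>x. dens_var f * f' x"])
       (auto intro!: derivative_eq_intros)
  then show ?thesis
    using dens_var_pos by (simp add: zero_bias_density_eq_atMost pos_divide_le_eq mult.commute)
qed

end

theorem corollary2p2:
  fixes f \<phi> \<phi>' :: "real \<Rightarrow> real" and xl xr :: real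
  assumes dens: "\<And>x. f x = exp (- \<phi> x)"
    and deriv: "\<And>x. (\<phi> has_real_derivative \<phi>' x) (at x)"
    and int1: "integrable lborel f" and total: "(\<integral>x. f x \<partial>lborel) = 1"
    and intx: "integrable lborel (\<lambda>x. x * f x)" and mean0: "(\<integral>x. x * f x \<partial>lborel) = 0"
    and intx2: "integrable lborel (\<lambda>x. x\<^sup>2 * f x)" and varpos: "dens_var f > 0"
    and xl: "xl < 0" and xr: "0 < xr"
    and left: "\<And>x. x \<le> xl \<Longrightarrow> \<phi>' x \<le> x / dens_var f"
    and right: "\<And>x. x \<ge> xr \<Longrightarrow> \<phi>' x \<ge> x / dens_var f"
  shows "(\<forall>x. (x < xl \<or> xr < x) \<longrightarrow> zero_bias_density f x \<le> f x)
    \<and> ((integrable lborel (\<lambda>x. x ^ 3 * f x) \<and> (\<integral>x. x ^ 3 * f x \<partial>lborel) = 0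
         \<and> (\<forall>x. xl < x \<and> x < xr \<longrightarrow> f x \<le> zero_bias_density f x))
       \<longrightarrow> convex_order_le (density lborel (\<lambda>x. ennreal (zero_bias_density f x)))
                          (density lborel (\<lambda>x. ennreal (f x))))"
proof -
  have f_pos: "0 < f x" for x
    using dens by simp
  interpret mean_zero_density f
    using f_pos int1 intx mean0 intx2 varpos by unfold_locales (auto intro: less_imp_le)
  have f_deriv: "(f has_real_derivative - \<phi>' x * f x) (at x)" for x
    unfolding dens[abs_def] by (auto intro!: derivative_eq_intros deriv)
  have tails: "zero_bias_density f x \<le> f x" if "x < xl \<or> xr < x" for x
    using that
  proof (elim disjE)
    assume "x < xl"
    then show ?thesis
      using left nonneg by (intro zero_bias_density_le_of_left_tail[OF f_deriv] mult_right_mono) auto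
  next
    assume "xr < x"
    then show ?thesis
      using right nonneg by (intro zero_bias_density_le_of_right_tail[OF f_deriv] mult_right_mono) auto
  qed
  moreover have "convex_order_le (density lborel (\<lambda>x. ennreal (zero_bias_density f x)))
                   (density lborel (\<lambda>x. ennreal (f x)))"
    if "integrable lborel (\<lambda>x. x ^ 3 * f x)" and "(\<integral>x. x ^ 3 * f x \<partial>lborel) = 0"
      and "\<And>x. xl < x \<Longrightarrow> x < xr \<Longrightarrow> f x \<le> zero_bias_density f x"
  proof (rule convex_order_le_density_two_crossings[where a=xl and b=xr])
    show "has_bochner_integral lborel f 1" "has_bochner_integral lborel (\<lambda>x. x * f x) 0"
      using int1 total intx mean0 by (simp_all add: has_bochner_integral_iff)
    show "has_bochner_integral lborel (\<lambda>x. x * zero_bias_density f x) 0"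
      using has_bochner_integral_zero_bias_first_moment[OF that(1)] that(2) by simp
  qed (use tails that(3) xl xr in \<open>auto simp: zero_bias_density_nonneg nonneg has_bochner_integral_zero_bias_density\<close>)
  ultimately show ?thesis
    by blast
qed

end
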